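(* Let $X$ and $Y$ be nonempty sets with $\operatorname{card} Y\ge 2$, and let $\mathcal P$ be a nonempty collection of subsets of $X$. Define the binary relation $\hat{\mathcal P}_w$ on $Y^X$ by declaring $f\,\hat{\mathcal P}_w\,g$ if and only if there exists $P\in\mathcal P$ with $P\subseteq\{x\in X\mid f(x)=g(x)\}$. Then $\mathcal P$ is a filterbase on $X$ if and only if $\hat{\mathcal P}_w$ is a nontrivial equivalence relation on $Y^X$.
   Context: Let $X$ be a nonempty set. A nonempty collection $\mathcal P$ of subsets of $X$ is a filterbase on $X$ if it satisfies: (F0) for every $n\ge 1$ and all $A_1,\dots,A_n\in\mathcal P$, $A_1\cap\cdots\cap A_n\neq\emptyset$; (F2) for all $A,B\in\mathcal P$ there is $C\in\mathcal P$ with $C\subseteq A\cap B$. $Y^X$ denotes the set of all functions $X\to Y$. An equivalence relation on a set $S$ is called nontrivial if it is not the total relation $S\times S$ (i.e. not all pairs of elements are related). *)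

theory Defs
  imports "HOL-Library.FuncSet"
begin

definition filterbase :: "'a set \<Rightarrow> 'a set set \<Rightarrow> bool" where
  "filterbase X \<P> \<longleftrightarrow>
     \<P> \<subseteq> Pow X \<and> \<P> \<noteq> {} \<and>
     (\<forall>n::nat. n \<ge> 1 \<longrightarrow> (\<forall>A. (\<forall>i<n. A i \<in> \<P>) \<longrightarrow> (\<Inter>i<n. A i) \<noteq> {})) \<and>
     (\<forall>A\<in>\<P>. \<forall>B\<in>\<P>. \<exists>C\<in>\<P>. C \<subseteq> A \<inter> B)"

definition funspace :: "'a set \<Rightarrow> 'b set \<Rightarrow> ('a \<Rightarrow> 'b) set" where
  "funspace X Y = (X \<rightarrow>\<^sub>E Y)"

definition weak_rel :: "'a set \<Rightarrow> 'b set \<Rightarrow> 'a set set \<Rightarrow> (('a \<Rightarrow> 'b) \<times> ('a \<Rightarrow> 'b)) set" where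
  "weak_rel X Y \<P> = {(f, g). f \<in> funspace X Y \<and> g \<in> funspace X Y \<and>
      (\<exists>P\<in>\<P>. P \<subseteq> {x\<in>X. f x = g x})}"

definition nontrivial_equiv :: "'c set \<Rightarrow> ('c \<times> 'c) set \<Rightarrow> bool" where
  "nontrivial_equiv S R \<longleftrightarrow> equiv S R \<and> R \<noteq> S \<times> S"

end

theory Submission
  imports Defs
begin

text \<open>Under \<open>Y\<close> having two points, \<open>f\<close> and \<open>g\<close> are related iff their agreement set contains a
  member of \<open>\<P>\<close>, and every subset of \<open>X\<close> is the agreement set of two suitable functions.
  Hence \<open>\<P>\<close> contains \<open>\<emptyset>\<close> exactly when the relation is total, and transitivity of the relation
  is exactly downward directedness (F2) of \<open>\<P>\<close>. Given (F2), the finite intersection property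
  (F0) reduces to \<open>\<emptyset> \<notin> \<P>\<close>.\<close>

definition downward_directed :: "'a set set \<Rightarrow> bool" where
  "downward_directed \<P> \<longleftrightarrow> (\<forall>A\<in>\<P>. \<forall>B\<in>\<P>. \<exists>C\<in>\<P>. C \<subseteq> A \<inter> B)"

lemma downward_directed_INTER_lessThan:
  fixes n :: nat
  assumes "downward_directed \<P>" and "n \<ge> 1" and "\<forall>i<n. A i \<in> \<P>"
  shows "\<exists>C\<in>\<P>. C \<subseteq> (\<Inter>i<n. A i)"
  using assms(2,3)
proof (induction n rule: dec_induct)
  case base
  then show ?case by auto
next
  case (step n)
  then obtain C where "C \<in> \<P>" "C \<subseteq> (\<Inter>i<n. A i)" by auto
  moreover obtain D where "D \<in> \<P>" "D \<subseteq> C \<inter> A n"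
    using assms(1) \<open>C \<in> \<P>\<close> step.prems unfolding downward_directed_def by blast
  ultimately show ?case by (auto simp: lessThan_Suc)
qed

lemma filterbase_iff_downward_directed:
  assumes "\<P> \<subseteq> Pow X" and "\<P> \<noteq> {}"
  shows "filterbase X \<P> \<longleftrightarrow> {} \<notin> \<P> \<and> downward_directed \<P>"
proof
  assume fb: "filterbase X \<P>"
  then have F0: "\<forall>n::nat. n \<ge> 1 \<longrightarrow> (\<forall>A. (\<forall>i<n. A i \<in> \<P>) \<longrightarrow> (\<Inter>i<n. A i) \<noteq> {})"
    unfolding filterbase_def by (elim conjE)
  moreover have "downward_directed \<P>"
    using fb unfolding filterbase_def downward_directed_def by (elim conjE)
  moreover have "{} \<notin> \<P>"
  proof
    assume "{} \<in> \<P>"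
    then show False
      using F0[rule_format, of 1 "\<lambda>_. {}"] by (simp add: lessThan_empty_iff)
  qed
  ultimately show "{} \<notin> \<P> \<and> downward_directed \<P>"
    by blast
next
  assume "{} \<notin> \<P> \<and> downward_directed \<P>"
  then have empty_not_mem: "{} \<notin> \<P>" and directed: "downward_directed \<P>"
    by blast+
  show "filterbase X \<P>"
    unfolding filterbase_def
  proof (intro conjI allI impI)
    fix n :: nat and A
    assume "n \<ge> 1" "\<forall>i<n. A i \<in> \<P>"
    then obtain C where "C \<in> \<P>" "C \<subseteq> (\<Inter>i<n. A i)"
      using downward_directed_INTER_lessThan[OF directed] by blast
    with empty_not_mem show "(\<Inter>i<n. A i) \<noteq> {}"
      by auto
  qed (use assms directed in \<open>simp_all add: downward_directed_def\<close>)
qed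

lemma weak_relI:
  "f \<in> funspace X Y \<Longrightarrow> g \<in> funspace X Y \<Longrightarrow> P \<in> \<P> \<Longrightarrow> P \<subseteq> {x\<in>X. f x = g x}
    \<Longrightarrow> (f, g) \<in> weak_rel X Y \<P>"
  unfolding weak_rel_def by blast

lemma weak_rel_subset: "weak_rel X Y \<P> \<subseteq> funspace X Y \<times> funspace X Y"
  unfolding weak_rel_def by auto

lemma refl_on_weak_rel:
  assumes "P \<in> \<P>" and "P \<subseteq> X"
  shows "refl_on (funspace X Y) (weak_rel X Y \<P>)"
  using assms unfolding refl_on_def weak_rel_def by auto

lemma sym_weak_rel: "sym (weak_rel X Y \<P>)"
  unfolding sym_def weak_rel_def by (auto simp: eq_commute)

lemma trans_weak_rel:
  assumes "downward_directed \<P>"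
  shows "trans (weak_rel X Y \<P>)"
proof (rule transI)
  fix f g h
  assume "(f, g) \<in> weak_rel X Y \<P>" and "(g, h) \<in> weak_rel X Y \<P>"
  then obtain A B where "A \<in> \<P>" "A \<subseteq> {x\<in>X. f x = g x}" "B \<in> \<P>" "B \<subseteq> {x\<in>X. g x = h x}"
    and "f \<in> funspace X Y" "h \<in> funspace X Y"
    unfolding weak_rel_def by auto
  moreover obtain C where "C \<in> \<P>" "C \<subseteq> A \<inter> B"
    using assms \<open>A \<in> \<P>\<close> \<open>B \<in> \<P>\<close> unfolding downward_directed_def by blast
  moreover have "C \<subseteq> {x\<in>X. f x = h x}"
    using calculation by (auto simp: subset_iff)
  ultimately show "(f, h) \<in> weak_rel X Y \<P>"
    by (intro weak_relI[of f X Y h C])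
qed

definition switch :: "'a set \<Rightarrow> 'a set \<Rightarrow> 'b \<Rightarrow> 'b \<Rightarrow> 'a \<Rightarrow> 'b" where
  "switch X S y1 y2 = restrict (\<lambda>x. if x \<in> S then y1 else y2) X"

lemma switch_in_funspace: "y1 \<in> Y \<Longrightarrow> y2 \<in> Y \<Longrightarrow> switch X S y1 y2 \<in> funspace X Y"
  unfolding switch_def funspace_def by auto

lemma agreement_set_switch:
  assumes "y1 \<noteq> y2"
  shows "{x\<in>X. switch X S y1 y2 x = switch X T y1 y2 x} = X - (S - T) - (T - S)"
  using assms unfolding switch_def by auto

lemma weak_rel_eq_Times_iff:
  assumes "y1 \<in> Y" "y2 \<in> Y" "y1 \<noteq> y2"
  shows "weak_rel X Y \<P> = funspace X Y \<times> funspace X Y \<longleftrightarrow> {} \<in> \<P>"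
proof
  assume "weak_rel X Y \<P> = funspace X Y \<times> funspace X Y"
  then have "(switch X X y1 y2, switch X {} y1 y2) \<in> weak_rel X Y \<P>"
    using assms by (simp add: switch_in_funspace)
  then obtain P where "P \<in> \<P>" "P \<subseteq> {x\<in>X. switch X X y1 y2 x = switch X {} y1 y2 x}"
    unfolding weak_rel_def by auto
  then show "{} \<in> \<P>"
    using agreement_set_switch[OF assms(3), of X X "{}"] by auto
next
  assume "{} \<in> \<P>"
  then show "weak_rel X Y \<P> = funspace X Y \<times> funspace X Y"
    unfolding weak_rel_def by auto
qed

lemma downward_directed_if_trans_weak_rel:
  assumes "y1 \<in> Y" "y2 \<in> Y" "y1 \<noteq> y2" and "\<P> \<subseteq> Pow X"
    and "trans (weak_rel X Y \<P>)"
  shows "downward_directed \<P>"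
  unfolding downward_directed_def
proof (intro ballI)
  fix A B
  assume "A \<in> \<P>" "B \<in> \<P>"
  with assms(4) have "A \<subseteq> X" "B \<subseteq> X"
    by auto
  let ?f = "switch X X y1 y2" and ?g = "switch X A y1 y2" and ?h = "switch X (A \<inter> B) y1 y2"
  have agree: "{x\<in>X. ?f x = ?g x} = A" "B \<subseteq> {x\<in>X. ?g x = ?h x}" "{x\<in>X. ?f x = ?h x} = A \<inter> B"
    using agreement_set_switch[OF assms(3), of X] \<open>A \<subseteq> X\<close> \<open>B \<subseteq> X\<close> by auto
  have switch_fun: "\<And>S. switch X S y1 y2 \<in> funspace X Y"
    using switch_in_funspace[OF assms(1,2)] .
  have "(?f, ?g) \<in> weak_rel X Y \<P>"
    by (rule weak_relI[OF switch_fun switch_fun \<open>A \<in> \<P>\<close>]) (simp add: agree(1))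
  moreover have "(?g, ?h) \<in> weak_rel X Y \<P>"
    by (rule weak_relI[OF switch_fun switch_fun \<open>B \<in> \<P>\<close> agree(2)])
  ultimately have "(?f, ?h) \<in> weak_rel X Y \<P>"
    by (rule transD[OF assms(5)])
  then obtain C where "C \<in> \<P>" "C \<subseteq> {x\<in>X. ?f x = ?h x}"
    unfolding weak_rel_def by blast
  with \<open>{x\<in>X. ?f x = ?h x} = A \<inter> B\<close> show "\<exists>C\<in>\<P>. C \<subseteq> A \<inter> B"
    by auto
qed

theorem mainTheorem2:
  fixes X :: "'a set" and Y :: "'b set" and \<P> :: "'a set set"
  assumes "X \<noteq> {}"
    and "\<exists>y1\<in>Y. \<exists>y2\<in>Y. y1 \<noteq> y2"
    and "\<P> \<noteq> {}"
    and "\<P> \<subseteq> Pow X"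
  shows "filterbase X \<P> \<longleftrightarrow> nontrivial_equiv (funspace X Y) (weak_rel X Y \<P>)"
proof -
  obtain y1 y2 where y: "y1 \<in> Y" "y2 \<in> Y" "y1 \<noteq> y2"
    using assms(2) by blast
  obtain P where "P \<in> \<P>" "P \<subseteq> X"
    using assms(3,4) by blast
  then have "equiv (funspace X Y) (weak_rel X Y \<P>) \<longleftrightarrow> trans (weak_rel X Y \<P>)"
    using refl_on_weak_rel[of P \<P> X Y] by (simp add: equiv_def weak_rel_subset sym_weak_rel)
  also have "\<dots> \<longleftrightarrow> downward_directed \<P>"
    using downward_directed_if_trans_weak_rel[OF y assms(4)] trans_weak_rel by (rule iffI)
  finally show ?thesis
    unfolding nontrivial_equiv_def filterbase_iff_downward_directed[OF assms(4,3)]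
      weak_rel_eq_Times_iff[OF y] by (simp add: conj_commute)
qed

end
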